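(* For every LTL formula $\varphi$ in PNF, $\mathrm{simp}(\varphi)\subseteq\mathrm{SET}(\partial^+(\varphi))$.
   Context: LTL formulae in positive normal form: $\varphi,\psi ::= p \mid \neg p \mid \mathbf{tt} \mid \mathbf{ff} \mid \varphi\wedge\psi \mid \varphi\vee\psi \mid \bigcirc\varphi \mid \varphi\,\mathcal{U}\,\psi \mid \varphi\,\mathcal{R}\,\psi$ (also derived $\Diamond\varphi=\mathbf{tt}\,\mathcal{U}\,\varphi$, $\Box\varphi=\mathbf{ff}\,\mathcal{R}\,\varphi$). A temporal formula is one not starting with $\wedge$ or $\vee$. $\varphi\,\dot\wedge\,\psi$ denotes formal conjunction, normalized modulo associativity, commutativity and idempotence w.r.t. a fixed total order on formulae. $\mathrm{simp}(\varphi\wedge\psi)=\{\varphi'\,\dot\wedge\,\psi'\mid\varphi'\in\mathrm{simp}(\varphi),\psi'\in\mathrm{simp}(\psi)\}$, $\mathrm{simp}(\varphi\vee\psi)=\mathrm{simp}(\varphi)\cup\mathrm{simp}(\psi)$, $\mathrm{simp}(\varphi)=\{\varphi\}$ for temporal $\varphi$. Iterated partial derivatives: $\partial^+(\ell)=\{\ell\}$ for literals $\ell$, $\partial^+(\mathbf{tt})=\{\mathbf{tt}\}$, $\partial^+(\mathbf{ff})=\{\mathbf{ff}\}$, $\partial^+(\varphi\vee\psi)=\partial^+(\varphi\wedge\psi)=\partial^+(\varphi)\cup\partial^+(\psi)$, $\partial^+(\bigcirc\varphi)=\{\bigcirc\varphi\}\cup\partial^+(\varphi)$, $\partial^+(\Diamond\varphi)=\{\Diamond\varphi\}\cup\partial^+(\varphi)$,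 $\partial^+(\Box\varphi)=\{\Box\varphi\}\cup\partial^+(\varphi)$, $\partial^+(\varphi\,\mathcal{U}\,\psi)=\{\varphi\,\mathcal{U}\,\psi\}\cup\partial^+(\psi)\cup\partial^+(\varphi)$, $\partial^+(\varphi\,\mathcal{R}\,\psi)=\{\varphi\,\mathcal{R}\,\psi\}\cup\partial^+(\psi)\cup\partial^+(\varphi)$. For an ordered set $X=\{x_1,x_2,\dots\}$, $\mathrm{SET}(X)=\{\mathbf{tt}\}\cup\{x_{i_1}\,\dot\wedge\,\cdots\,\dot\wedge\,x_{i_n}\mid n\ge1, i_1<\dots<i_n\}$, the set of all formal conjunctions of elements of $X$. *)

theory Defs
  imports Main
begin

datatype 'a ltl =
    Prop 'a
  | NProp 'a
  | TT | FF
  | And "'a ltl" "'a ltl"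
  | Or "'a ltl" "'a ltl"
  | Next "'a ltl"
  | Until "'a ltl" "'a ltl"
  | Release "'a ltl" "'a ltl"

definition Diamond :: "'a ltl \<Rightarrow> 'a ltl" where "Diamond \<phi> = Until TT \<phi>"
definition Box :: "'a ltl \<Rightarrow> 'a ltl" where "Box \<phi> = Release FF \<phi>"

fun temporal :: "'a ltl \<Rightarrow> bool" where
  "temporal (And _ _) = False"
| "temporal (Or _ _) = False"
| "temporal _ = True"

text \<open>A formal conjunction, normalized modulo associativity, commutativity and
idempotence, is represented by its (finite, nonempty) set of temporal conjuncts;
formal conjunction of two such is the union of the conjunct sets.\<close>
type_synonym 'a fconj = "'a ltl set"

definition fand :: "'a fconj \<Rightarrow> 'a fconj \<Rightarrow> 'a fconj" where
  "fand A B = A \<union> B"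

fun simp :: "'a ltl \<Rightarrow> 'a fconj set" where
  "simp (And \<phi> \<psi>) = {fand \<phi>' \<psi>' | \<phi>' \<psi>'. \<phi>' \<in> simp \<phi> \<and> \<psi>' \<in> simp \<psi>}"
| "simp (Or \<phi> \<psi>) = simp \<phi> \<union> simp \<psi>"
| "simp \<phi> = {{\<phi>}}"

text \<open>Iterated partial derivatives. The clauses for the derived operators
Diamond (= tt U phi) and Box (= ff R phi) take precedence over the general
Until / Release clauses (sequential pattern matching).\<close>
fun dplus :: "'a ltl \<Rightarrow> 'a ltl set" where
  "dplus (Prop p) = {Prop p}"
| "dplus (NProp p) = {NProp p}"
| "dplus TT = {TT}"
| "dplus FF = {FF}"
| "dplus (Or \<phi> \<psi>) = dplus \<phi> \<union> dplus \<psi>"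
| "dplus (And \<phi> \<psi>) = dplus \<phi> \<union> dplus \<psi>"
| "dplus (Next \<phi>) = {Next \<phi>} \<union> dplus \<phi>"
| "dplus (Until TT \<phi>) = {Until TT \<phi>} \<union> dplus \<phi>"
| "dplus (Release FF \<phi>) = {Release FF \<phi>} \<union> dplus \<phi>"
| "dplus (Until \<phi> \<psi>) = {Until \<phi> \<psi>} \<union> dplus \<psi> \<union> dplus \<phi>"
| "dplus (Release \<phi> \<psi>) = {Release \<phi> \<psi>} \<union> dplus \<psi> \<union> dplus \<phi>"

definition SET :: "'a ltl set \<Rightarrow> 'a fconj set" where
  "SET X = {{TT}} \<union> {S. S \<subseteq> X \<and> S \<noteq> {} \<and> finite S}"

end

theory Submission
  imports Defs
begin

lemma temporal_in_dplus: "temporal \<phi> \<Longrightarrow> \<phi> \<in> dplus \<phi>"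
  by (induction \<phi> rule: dplus.induct) auto

lemma simp_finite_nonempty: "S \<in> simp \<phi> \<Longrightarrow> finite S \<and> S \<noteq> {}"
  by (induction \<phi> arbitrary: S) (auto simp: fand_def)

lemma simp_subset_dplus: "S \<in> simp \<phi> \<Longrightarrow> S \<subseteq> dplus \<phi>"
proof (induction \<phi> arbitrary: S)
  case (And \<phi> \<psi>)
  then show ?case by (fastforce simp: fand_def)
qed (auto intro: temporal_in_dplus)

theorem lemma6:
  fixes \<phi> :: "'a ltl"
  shows "simp \<phi> \<subseteq> SET (dplus \<phi>)"
  using simp_subset_dplus simp_finite_nonempty unfolding SET_def by blast

end
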